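(* Let $U$ be a finite set of cardinality $n\ge1$. There is a bijection between the set $(C\circ\mathcal P)^\bullet[U]$ and the set of pairs $(\mathcal X,\lambda)$ where $\mathcal X$ is an $n$-periodic Ptolemy diagram of the $\infty$-gon all of whose arcs have length at most $n$, and $\lambda$ is a bijection from the set $\mathbb Z/n\mathbb Z$ of residue classes of vertices of the $\infty$-gon modulo $n$ to $U$.
   Context: An arc of the $\infty$-gon is a pair $(i,j)$ of integers with $j-i\ge2$, of length $j-i$; the vertices of the $\infty$-gon are the integers. A collection of arcs is $n$-periodic if it is closed under $(i,j)\mapsto(i+tn,j+tn)$, $t\in\mathbb Z$. Two arcs $(i,j),(k,l)$ cross if $i<k<j<l$ or $k<i<l<j$. A Ptolemy diagram of the $\infty$-gon is a collection $\mathcal X$ of arcs such that whenever $(i,j),(r,s)\in\mathcal X$ cross with $i<r$, each of $(i,r),(i,s),(r,j),(j,s)$ which is an arc lies in $\mathcal X$. For $N\ge 3$, a Ptolemy diagram of a convex $N$-gon is a set of diagonals such that whenever two diagonals in it cross, all diagonals among their four endpoints belong to it. A Ptolemy diagram with distinguished base edge on the $(N+1)$-gon, $N\ge1$, is a Ptolemy diagram of the $(N+1)$-gon together with a chosen edge (for $N=1$: the degenerate diagram consisting of two vertices and one edge); the base vertex is the first vertex of the base edge going counterclockwise. For a finite set $V$ with $|V|=N$, $\mathcal P[V]$ is the set of Ptolemy diagrams with distinguished base edge on the $(N+1)$-gon whose non-base vertices are labelled bijectively by $V$. $(C\circ\mathcal P)[U]$ is the set of cyclically ordered tuples $(P_1,\dots,P_r)$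 (up to cyclic rotation) where $U=V_1\sqcup\dots\sqcup V_r$ is a set partition into nonempty blocks and $P_s\in\mathcal P[V_s]$. The pointed version $(C\circ\mathcal P)^\bullet[U]$ is the set of pairs $(\gamma,u)$ with $\gamma\in(C\circ\mathcal P)[U]$ and $u\in U$. *)

theory Defs
  imports "HOL-Library.FuncSet"
begin

definition crosses :: "'a::linorder \<times> 'a \<Rightarrow> 'a \<times> 'a \<Rightarrow> bool" where
  "crosses a b \<longleftrightarrow> (case a of (i, j) \<Rightarrow> case b of (k, l) \<Rightarrow>
      (i < k \<and> k < j \<and> j < l) \<or> (k < i \<and> i < l \<and> l < j))"

definition is_arc :: "int \<times> int \<Rightarrow> bool" where
  "is_arc a \<longleftrightarrow> snd a - fst a \<ge> 2"

definition arc_length :: "int \<times> int \<Rightarrow> int" where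
  "arc_length a = snd a - fst a"

definition periodic_arcs :: "int \<Rightarrow> (int \<times> int) set \<Rightarrow> bool" where
  "periodic_arcs n X \<longleftrightarrow> (\<forall>i j t. (i, j) \<in> X \<longrightarrow> (i + t * n, j + t * n) \<in> X)"

definition ptolemy_inf :: "(int \<times> int) set \<Rightarrow> bool" where
  "ptolemy_inf X \<longleftrightarrow> (\<forall>a \<in> X. is_arc a) \<and>
     (\<forall>i j r s. (i, j) \<in> X \<and> (r, s) \<in> X \<and> crosses (i, j) (r, s) \<and> i < r \<longrightarrow>
        (\<forall>b \<in> {(i, r), (i, s), (r, j), (j, s)}. is_arc b \<longrightarrow> b \<in> X))"

definition zmod_classes :: "int \<Rightarrow> int set set" where
  "zmod_classes n = {{k. k mod n = i mod n} | i. True}"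

text \<open>A convex M-gon has vertices 0,...,M-1 in counterclockwise order.
  Diagonals are pairs (i,j), i<j, of non-adjacent vertices.\<close>
definition is_diagonal :: "nat \<Rightarrow> nat \<times> nat \<Rightarrow> bool" where
  "is_diagonal M d \<longleftrightarrow> (case d of (i, j) \<Rightarrow>
      i < j \<and> j < M \<and> j - i \<ge> 2 \<and> \<not> (i = 0 \<and> j = M - 1))"

definition ptolemy_poly :: "nat \<Rightarrow> (nat \<times> nat) set \<Rightarrow> bool" where
  "ptolemy_poly M D \<longleftrightarrow> (\<forall>d \<in> D. is_diagonal M d) \<and>
     (\<forall>i j k l. (i, j) \<in> D \<and> (k, l) \<in> D \<and> crosses (i, j) (k, l) \<longrightarrow>
        (\<forall>x \<in> {i, j, k, l}. \<forall>y \<in> {i, j, k, l}. is_diagonal M (x, y) \<longrightarrow> (x, y) \<in> D))"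

text \<open>Ptolemy diagrams with distinguished base edge on the (N+1)-gon, labelled by V (|V| = N).
  Canonical representation: the (N+1)-gon has vertices 0..N counterclockwise, the base
  vertex is 0 and the base edge is {0,1}; the list ls labels vertex k (1 \<le> k \<le> N) by ls!(k-1).
  For N = 1 the only diagram is the degenerate one (no diagonals).\<close>
definition P_struct :: "'a set \<Rightarrow> ((nat \<times> nat) set \<times> 'a list) set" where
  "P_struct V = {(D, ls). distinct ls \<and> set ls = V \<and> ls \<noteq> [] \<and> ptolemy_poly (length ls + 1) D}"

text \<open>(C o P)[U]: cyclically ordered tuples of P-structures on the blocks of a set partition of U,
  represented as rotation orbits of lists.\<close>
definition CP_valid :: "'a set \<Rightarrow> ((nat \<times> nat) set \<times> 'a list) list \<Rightarrow> bool" where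
  "CP_valid U ps \<longleftrightarrow> ps \<noteq> [] \<and> (\<forall>p \<in> set ps. p \<in> P_struct (set (snd p))) \<and>
     distinct (concat (map snd ps)) \<and> set (concat (map snd ps)) = U"

definition CP_struct :: "'a set \<Rightarrow> ((nat \<times> nat) set \<times> 'a list) list set set" where
  "CP_struct U = {{rotate k ps | k. True} | ps. CP_valid U ps}"

definition CP_pointed :: "'a set \<Rightarrow> (((nat \<times> nat) set \<times> 'a list) list set \<times> 'a) set" where
  "CP_pointed U = CP_struct U \<times> U"

definition periodic_pairs :: "'a set \<Rightarrow> ((int \<times> int) set \<times> (int set \<Rightarrow> 'a)) set" where
  "periodic_pairs U = {(X, lam).
     periodic_arcs (int (card U)) X \<and> ptolemy_inf X \<and>
     (\<forall>a \<in> X. arc_length a \<le> int (card U)) \<and>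
     lam \<in> zmod_classes (int (card U)) \<rightarrow>\<^sub>E U \<and>
     bij_betw lam (zmod_classes (int (card U))) U}"

end

theory Submission
  imports Defs
begin

text \<open>
  Let n = |U|. The bijection between pointed (C o P)-structures on U and pairs (X, lambda) of
  an n-periodic Ptolemy diagram with arcs of length at most n and a labelling of Z/nZ by U is
  obtained as a composite of three explicit bijections:

  (1) marking: a pointed cyclic tuple of labelled diagrams corresponds to a representative list
      rotated so that the marked label lies in the first block, plus its position k there;
  (2) forgetting labels: such a pointed list splits into its shape (the polygon diagrams with
      their sizes, and k) and the linear order of U obtained by reading off the labels;
  (3) the shape corresponds to a periodic diagram, and the linear order to a labelling of the
      residue classes.

  The heart is (3). Laying the polygon blocks side by side on the segment [0, n] of the
  infinity-gon (each (N+1)-gon on a segment of length N, its edge (0, N) becoming an arc)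
  gives exactly the Ptolemy diagrams supported on [0, n]: such a diagram is recovered by
  cutting it at its uncovered vertices. Periodizing then gives the n-periodic diagrams with
  arcs of length at most n in which 0 is uncovered, and translating by -(k+1) makes the
  position k visible as the distance from the last uncovered vertex before 0.
\<close>

section \<open>Ptolemy diagrams of the infinity-gon\<close>

text \<open>A vertex v is covered by X if some arc of X passes strictly over it. Uncovered vertices
  are the places where a diagram can be cut into independent pieces.\<close>
definition covered :: "(int \<times> int) set \<Rightarrow> int \<Rightarrow> bool" where
  "covered X v \<longleftrightarrow> (\<exists>a b. (a, b) \<in> X \<and> a < v \<and> v < b)"

lemma ptolemy_infD:
  assumes "ptolemy_inf X" "(i, j) \<in> X" "(r, s) \<in> X" "i < r" "r < j" "j < s"
  shows "(i, s) \<in> X" "r - i \<ge> 2 \<Longrightarrow> (i, r) \<in> X" "j - r \<ge> 2 \<Longrightarrow> (r, j) \<in> X"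
    "s - j \<ge> 2 \<Longrightarrow> (j, s) \<in> X"
proof -
  have "crosses (i, j) (r, s)" using assms unfolding crosses_def by auto
  then have "\<forall>b \<in> {(i, r), (i, s), (r, j), (j, s)}. is_arc b \<longrightarrow> b \<in> X"
    using assms(1-4) unfolding ptolemy_inf_def by blast
  then show "(i, s) \<in> X" "r - i \<ge> 2 \<Longrightarrow> (i, r) \<in> X" "j - r \<ge> 2 \<Longrightarrow> (r, j) \<in> X"
    "s - j \<ge> 2 \<Longrightarrow> (j, s) \<in> X"
    using assms(4-6) unfolding is_arc_def by auto
qed

lemma ptolemy_inf_arc: "ptolemy_inf X \<Longrightarrow> (a, b) \<in> X \<Longrightarrow> b - a \<ge> 2"
  unfolding ptolemy_inf_def is_arc_def by (metis fst_conv snd_conv)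

lemma ptolemy_infI:
  assumes "\<And>a b. (a, b) \<in> X \<Longrightarrow> b - a \<ge> 2"
    and "\<And>i j r s. (i, j) \<in> X \<Longrightarrow> (r, s) \<in> X \<Longrightarrow> i < r \<Longrightarrow> r < j \<Longrightarrow> j < s \<Longrightarrow>
      (i, s) \<in> X \<and> (r - i \<ge> 2 \<longrightarrow> (i, r) \<in> X) \<and> (j - r \<ge> 2 \<longrightarrow> (r, j) \<in> X) \<and>
      (s - j \<ge> 2 \<longrightarrow> (j, s) \<in> X)"
  shows "ptolemy_inf X"
  unfolding ptolemy_inf_def
proof (intro conjI allI impI ballI)
  fix a assume "a \<in> X" then show "is_arc a"
    using assms(1) unfolding is_arc_def by (metis prod.collapse)
next
  fix i j r s b
  assume h: "(i, j) \<in> X \<and> (r, s) \<in> X \<and> crosses (i, j) (r, s) \<and> i < r"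
    and b: "b \<in> {(i, r), (i, s), (r, j), (j, s)}" and "is_arc b"
  from h have "r < j" "j < s" unfolding crosses_def by auto
  with h b \<open>is_arc b\<close> assms(2)[of i j r s] show "b \<in> X" unfolding is_arc_def by auto
qed

lemma ptolemy_inf_empty: "ptolemy_inf {}"
  by (rule ptolemy_infI) auto

definition shift :: "int \<Rightarrow> (int \<times> int) set \<Rightarrow> (int \<times> int) set" where
  "shift d X = (\<lambda>(a, b). (a + d, b + d)) ` X"

lemma shift_mem [simp]: "(a, b) \<in> shift d X \<longleftrightarrow> (a - d, b - d) \<in> X"
proof
  assume "(a, b) \<in> shift d X"
  then obtain p q where "(p, q) \<in> X" "(a, b) = (p + d, q + d)" unfolding shift_def by auto
  then show "(a - d, b - d) \<in> X" by simp
next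
  assume "(a - d, b - d) \<in> X"
  then have "(\<lambda>(a, b). (a + d, b + d)) (a - d, b - d) \<in> shift d X"
    unfolding shift_def by (rule imageI)
  then show "(a, b) \<in> shift d X" by simp
qed

lemma shift_shift [simp]: "shift d (shift e X) = shift (d + e) X"
  by (rule set_eqI) (case_tac x, simp add: algebra_simps)

lemma shift_0 [simp]: "shift 0 X = X"
  by (rule set_eqI) (case_tac x, simp)

lemma shift_inj: "shift d X = shift d Z \<Longrightarrow> X = Z"
  by (metis add.right_inverse shift_0 shift_shift)

lemma covered_shift: "covered (shift d X) v \<longleftrightarrow> covered X (v - d)"
proof
  assume "covered (shift d X) v"
  then obtain a b where "(a - d, b - d) \<in> X" "a < v" "v < b" unfolding covered_def by auto
  then show "covered X (v - d)" unfolding covered_def by (intro exI[of _ "a - d"] exI[of _ "b - d"]) auto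
next
  assume "covered X (v - d)"
  then obtain a b where "(a, b) \<in> X" "a < v - d" "v - d < b" unfolding covered_def by auto
  then show "covered (shift d X) v"
    unfolding covered_def by (intro exI[of _ "a + d"] exI[of _ "b + d"]) auto
qed

lemma ptolemy_inf_shift:
  assumes P: "ptolemy_inf X" shows "ptolemy_inf (shift d X)"
proof (rule ptolemy_infI)
  fix a b assume "(a, b) \<in> shift d X"
  then show "b - a \<ge> 2" using ptolemy_inf_arc[OF P, of "a - d" "b - d"] by simp
next
  fix i j r s assume "(i, j) \<in> shift d X" "(r, s) \<in> shift d X" "i < r" "r < j" "j < s"
  then have "(i - d, j - d) \<in> X" "(r - d, s - d) \<in> X" "i - d < r - d" "r - d < j - d" "j - d < s - d"
    by auto
  from ptolemy_infD[OF P this] show "(i, s) \<in> shift d X \<and> (r - i \<ge> 2 \<longrightarrow> (i, r) \<in> shift d X) \<and>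
      (j - r \<ge> 2 \<longrightarrow> (r, j) \<in> shift d X) \<and> (s - j \<ge> 2 \<longrightarrow> (j, s) \<in> shift d X)"
    by simp
qed

text \<open>Two Ptolemy diagrams lying on either side of a vertex N never cross, so their union is
  again a Ptolemy diagram.\<close>
lemma ptolemy_inf_union:
  assumes PA: "ptolemy_inf A" and PB: "ptolemy_inf B"
    and A: "\<And>a b. (a, b) \<in> A \<Longrightarrow> b \<le> N" and B: "\<And>a b. (a, b) \<in> B \<Longrightarrow> N \<le> a"
  shows "ptolemy_inf (A \<union> B)"
proof (rule ptolemy_infI)
  fix a b assume "(a, b) \<in> A \<union> B"
  then show "b - a \<ge> 2" using ptolemy_inf_arc[OF PA] ptolemy_inf_arc[OF PB] by blast
next
  fix i j r s assume h: "(i, j) \<in> A \<union> B" "(r, s) \<in> A \<union> B" "i < r" "r < j" "j < s"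
  have "\<not> ((i, j) \<in> A \<and> (r, s) \<in> B)" "\<not> ((i, j) \<in> B \<and> (r, s) \<in> A)"
    using A B h(3-5) by force+
  with h(1,2) consider "(i, j) \<in> A" "(r, s) \<in> A" | "(i, j) \<in> B" "(r, s) \<in> B" by blast
  then show "(i, s) \<in> A \<union> B \<and> (r - i \<ge> 2 \<longrightarrow> (i, r) \<in> A \<union> B) \<and>
      (j - r \<ge> 2 \<longrightarrow> (r, j) \<in> A \<union> B) \<and> (s - j \<ge> 2 \<longrightarrow> (j, s) \<in> A \<union> B)"
  proof cases
    case 1 from ptolemy_infD[OF PA 1 h(3-5)] show ?thesis by blast
  next
    case 2 from ptolemy_infD[OF PB 2 h(3-5)] show ?thesis by blast
  qed
qed

lemma ptolemy_inf_restrict: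
  assumes P: "ptolemy_inf Y" shows "ptolemy_inf {p \<in> Y. lo \<le> fst p \<and> snd p \<le> hi}"
proof (rule ptolemy_infI)
  fix a b assume "(a, b) \<in> {p \<in> Y. lo \<le> fst p \<and> snd p \<le> hi}"
  then show "b - a \<ge> 2" using ptolemy_inf_arc[OF P] by blast
next
  fix i j r s
  assume h: "(i, j) \<in> {p \<in> Y. lo \<le> fst p \<and> snd p \<le> hi}"
    "(r, s) \<in> {p \<in> Y. lo \<le> fst p \<and> snd p \<le> hi}" "i < r" "r < j" "j < s"
  then have "(i, j) \<in> Y" "(r, s) \<in> Y" by auto
  from ptolemy_infD[OF P this h(3-5)] h show "(i, s) \<in> {p \<in> Y. lo \<le> fst p \<and> snd p \<le> hi} \<and>
      (r - i \<ge> 2 \<longrightarrow> (i, r) \<in> {p \<in> Y. lo \<le> fst p \<and> snd p \<le> hi}) \<and>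
      (j - r \<ge> 2 \<longrightarrow> (r, j) \<in> {p \<in> Y. lo \<le> fst p \<and> snd p \<le> hi}) \<and>
      (s - j \<ge> 2 \<longrightarrow> (j, s) \<in> {p \<in> Y. lo \<le> fst p \<and> snd p \<le> hi})"
    by auto
qed

text \<open>A Ptolemy diagram with bounded arc lengths leaves some vertex uncovered: the right end
  of a longest arc. (A crossing arc would produce, by the Ptolemy condition, a longer one.)\<close>
lemma exists_uncovered:
  assumes P: "ptolemy_inf X" and L: "\<forall>a\<in>X. arc_length a \<le> n"
  shows "\<exists>v. \<not> covered X v"
proof (cases "X = {}")
  case True then show ?thesis unfolding covered_def by auto
next
  case False
  have fin: "finite (arc_length ` X)"
    by (rule finite_subset[of _ "{0..n}"])
      (use L ptolemy_inf_arc[OF P] in \<open>force simp: arc_length_def\<close>)+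
  define l where "l = Max (arc_length ` X)"
  have "l \<in> arc_length ` X" unfolding l_def using fin False by auto
  then obtain a b where ab: "(a, b) \<in> X" "b - a = l" unfolding arc_length_def by auto
  have longest: "q - p \<le> l" if "(p, q) \<in> X" for p q
    unfolding l_def using fin that by (metis Max_ge arc_length_def fst_conv image_eqI snd_conv)
  have "\<not> covered X b"
  proof
    assume "covered X b"
    then obtain p q where pq: "(p, q) \<in> X" "p < b" "b < q" unfolding covered_def by auto
    show False
    proof (cases "p \<le> a")
      case True then show ?thesis using longest[OF pq(1)] ab pq by auto
    next
      case False
      then have "(a, q) \<in> X" using ptolemy_infD(1)[OF P ab(1) pq(1)] pq by auto
      then show ?thesis using longest[of a q] ab pq by auto
    qed
  qed
  then show ?thesis by blast
qed

text \<open>If Y lives on the vertices \<open>\<ge> 0\<close>, all vertices strictly between 0 and N are covered and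
  N is not, then the arc (0, N) belongs to Y: it is the longest arc starting at 0.\<close>
lemma first_block_arc:
  assumes P: "ptolemy_inf Y" and nonneg: "\<And>a b. (a, b) \<in> Y \<Longrightarrow> 0 \<le> a"
    and N: "\<not> covered Y N" and N2: "N \<ge> 2" and cov: "\<And>v. 0 < v \<Longrightarrow> v < N \<Longrightarrow> covered Y v"
  shows "(0, N) \<in> Y"
proof -
  have "covered Y 1" using cov N2 by auto
  then obtain a0 b0 where ab0: "(a0, b0) \<in> Y" "a0 < 1" "1 < b0" unfolding covered_def by auto
  have before_N: "q \<le> N" if "(p, q) \<in> Y" "p < N" for p q
    using N that unfolding covered_def by (meson not_le)
  define S where "S = {b. (0, b) \<in> Y}"
  have "S \<subseteq> {0..N}" using before_N N2 ptolemy_inf_arc[OF P] by (fastforce simp: S_def)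
  then have finS: "finite S" using finite_subset by blast
  have "a0 = 0" using ab0 nonneg[OF ab0(1)] by simp
  then have "b0 \<in> S" using ab0 by (simp add: S_def)
  define b where "b = Max S"
  have "b \<in> S" unfolding b_def using finS \<open>b0 \<in> S\<close> by (intro Max_in) auto
  then have bY: "(0, b) \<in> Y" by (simp add: S_def)
  have bmax: "q \<le> b" if "(0, q) \<in> Y" for q unfolding b_def using finS that by (simp add: S_def)
  have "b \<le> N" using before_N[OF bY] N2 by auto
  moreover have "b \<ge> 2" using ptolemy_inf_arc[OF P bY] by auto
  moreover have "\<not> covered Y b"
  proof
    assume "covered Y b"
    then obtain p q where pq: "(p, q) \<in> Y" "p < b" "b < q" unfolding covered_def by auto
    have "(0, q) \<in> Y"
    proof (cases "p = 0")
      case False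
      with nonneg[OF pq(1)] show ?thesis using ptolemy_infD(1)[OF P bY pq(1)] pq by auto
    qed (use pq in simp)
    then show False using bmax pq by fastforce
  qed
  ultimately have "b = N" using cov[of b] by fastforce
  then show ?thesis using bY by simp
qed

section \<open>Polygon diagrams as blocks of the infinity-gon\<close>

lemma ptolemy_polyD:
  assumes "ptolemy_poly M D" "(i, j) \<in> D" "(k, l) \<in> D" "i < k" "k < j" "j < l"
    "x \<in> {i, j, k, l}" "y \<in> {i, j, k, l}" "is_diagonal M (x, y)"
  shows "(x, y) \<in> D"
proof -
  have "crosses (i, j) (k, l)" using assms(4-6) unfolding crosses_def by auto
  then show ?thesis using assms unfolding ptolemy_poly_def by blast
qed

lemma ptolemy_poly_diagonal: "ptolemy_poly M D \<Longrightarrow> d \<in> D \<Longrightarrow> is_diagonal M d"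
  unfolding ptolemy_poly_def by blast

lemma is_diagonal_Suc_iff:
  "is_diagonal (N + 1) (x, y) \<longleftrightarrow> x < y \<and> y \<le> N \<and> y - x \<ge> 2 \<and> \<not> (x = 0 \<and> y = N)"
  unfolding is_diagonal_def by auto

text \<open>The (N+1)-gon with vertices 0, ..., N is laid on the segment [0, N] of the infinity-gon:
  its diagonals become arcs, and its edge (0, N) becomes the arc (0, N) enclosing the block
  (for N = 1 this edge has length 1 and is not an arc).\<close>
definition block_arcs :: "(nat \<times> nat) set \<Rightarrow> nat \<Rightarrow> (int \<times> int) set" where
  "block_arcs D N = (\<lambda>(a, b). (int a, int b)) ` D \<union> (if N \<ge> 2 then {(0, int N)} else {})"

lemma block_arcs_mem:
  "(a, b) \<in> block_arcs D N \<longleftrightarrow>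
     (0 \<le> a \<and> 0 \<le> b \<and> (nat a, nat b) \<in> D) \<or> (a = 0 \<and> b = int N \<and> N \<ge> 2)"
proof -
  have "(a, b) \<in> (\<lambda>(a, b). (int a, int b)) ` D \<longleftrightarrow> 0 \<le> a \<and> 0 \<le> b \<and> (nat a, nat b) \<in> D"
    by (force simp: image_iff)
  then show ?thesis unfolding block_arcs_def by auto
qed

lemma block_arcs_bounds:
  assumes "ptolemy_poly (N + 1) D" "(a, b) \<in> block_arcs D N"
  shows "0 \<le> a" "b \<le> int N" "a + 2 \<le> b" "\<not> (a = 0 \<and> b = int N) \<Longrightarrow> (nat a, nat b) \<in> D"
proof -
  have "0 \<le> a \<and> b \<le> int N \<and> a + 2 \<le> b \<and> (\<not> (a = 0 \<and> b = int N) \<longrightarrow> (nat a, nat b) \<in> D)"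
  proof (cases "a = 0 \<and> b = int N \<and> N \<ge> 2")
    case False
    then have "0 \<le> a" "0 \<le> b" "(nat a, nat b) \<in> D" using assms(2) block_arcs_mem by blast+
    moreover from this have "is_diagonal (N + 1) (nat a, nat b)"
      using ptolemy_poly_diagonal assms(1) by blast
    ultimately show ?thesis unfolding is_diagonal_Suc_iff by auto
  qed auto
  then show "0 \<le> a" "b \<le> int N" "a + 2 \<le> b" "\<not> (a = 0 \<and> b = int N) \<Longrightarrow> (nat a, nat b) \<in> D"
    by auto
qed

lemma ptolemy_inf_block_arcs:
  assumes P: "ptolemy_poly (N + 1) D" shows "ptolemy_inf (block_arcs D N)"
proof (rule ptolemy_infI)
  fix a b assume "(a, b) \<in> block_arcs D N"
  then show "b - a \<ge> 2" using block_arcs_bounds[OF P] by force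
next
  fix i j r s assume h: "(i, j) \<in> block_arcs D N" "(r, s) \<in> block_arcs D N" "i < r" "r < j" "j < s"
  note b1 = block_arcs_bounds[OF P h(1)] and b2 = block_arcs_bounds[OF P h(2)]
  have "\<not> (i = 0 \<and> j = int N)" "\<not> (r = 0 \<and> s = int N)" using b1 b2 h by auto
  then have "(nat i, nat j) \<in> D" "(nat r, nat s) \<in> D" using b1(4) b2(4) by blast+
  note cross = ptolemy_polyD[OF P this]
  have four_points: "(x, y) \<in> block_arcs D N"
    if "x \<in> {i, j, r, s}" "y \<in> {i, j, r, s}" "x < y" "y - x \<ge> 2" for x y
  proof (cases "x = 0 \<and> y = int N")
    case True then show ?thesis using that unfolding block_arcs_mem by auto
  next
    case False
    have xy: "0 \<le> x" "y \<le> int N" using that b1 b2 h by auto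
    have "is_diagonal (N + 1) (nat x, nat y)" unfolding is_diagonal_Suc_iff using xy that False by auto
    moreover have "nat x \<in> {nat i, nat j, nat r, nat s}" "nat y \<in> {nat i, nat j, nat r, nat s}"
      using that by auto
    moreover have "nat i < nat r" "nat r < nat j" "nat j < nat s" using h b1 by auto
    ultimately have "(nat x, nat y) \<in> D" using cross by blast
    then show ?thesis unfolding block_arcs_mem using xy that by auto
  qed
  show "(i, s) \<in> block_arcs D N \<and> (r - i \<ge> 2 \<longrightarrow> (i, r) \<in> block_arcs D N) \<and>
      (j - r \<ge> 2 \<longrightarrow> (r, j) \<in> block_arcs D N) \<and> (s - j \<ge> 2 \<longrightarrow> (j, s) \<in> block_arcs D N)"
  proof (intro conjI impI)
    show "(i, s) \<in> block_arcs D N" using four_points[of i s] h by simp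
    show "(i, r) \<in> block_arcs D N" if "r - i \<ge> 2" using four_points[of i r] h that by simp
    show "(r, j) \<in> block_arcs D N" if "j - r \<ge> 2" using four_points[of r j] h that by simp
    show "(j, s) \<in> block_arcs D N" if "s - j \<ge> 2" using four_points[of j s] h that by simp
  qed
qed

lemma block_arcs_inj:
  assumes "ptolemy_poly (N + 1) D" "ptolemy_poly (N + 1) D'" "block_arcs D N = block_arcs D' N"
  shows "D = D'"
proof -
  have "(x, y) \<in> B" if "ptolemy_poly (N + 1) A" "block_arcs A N = block_arcs B N" "(x, y) \<in> A"
    for A B x y
  proof -
    have "is_diagonal (N + 1) (x, y)" using ptolemy_poly_diagonal that(1,3) .
    moreover have "(int x, int y) \<in> block_arcs A N" using that(3) by (simp add: block_arcs_mem)
    then have "(int x, int y) \<in> block_arcs B N" using that(2) by simp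
    ultimately show ?thesis unfolding block_arcs_mem is_diagonal_Suc_iff by auto
  qed
  from this[OF assms(1,3)] this[OF assms(2) assms(3)[symmetric]] show ?thesis by auto
qed

definition polygon_part :: "(int \<times> int) set \<Rightarrow> nat \<Rightarrow> (nat \<times> nat) set" where
  "polygon_part Y N = {(x, y). (int x, int y) \<in> Y \<and> y \<le> N \<and> \<not> (x = 0 \<and> y = N)}"

lemma ptolemy_poly_polygon_part:
  assumes P: "ptolemy_inf Y" shows "ptolemy_poly (N + 1) (polygon_part Y N)"
  unfolding ptolemy_poly_def
proof (intro conjI ballI allI impI)
  fix d assume "d \<in> polygon_part Y N"
  then obtain x y where d: "d = (x, y)" "(int x, int y) \<in> Y" "y \<le> N" "\<not> (x = 0 \<and> y = N)"
    unfolding polygon_part_def by auto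
  then have "int x + 2 \<le> int y" using ptolemy_inf_arc[OF P d(2)] by auto
  then show "is_diagonal (N + 1) d" unfolding d is_diagonal_Suc_iff using d by auto
next
  fix i j k l x y
  assume h: "(i, j) \<in> polygon_part Y N \<and> (k, l) \<in> polygon_part Y N \<and> crosses (i, j) (k, l)"
    and x: "x \<in> {i, j, k, l}" and y: "y \<in> {i, j, k, l}" and dg: "is_diagonal (N + 1) (x, y)"
  have ordered: "(x, y) \<in> polygon_part Y N"
    if "(i, j) \<in> polygon_part Y N" "(k, l) \<in> polygon_part Y N" "i < k" "k < j" "j < l"
      and "x \<in> {i, j, k, l}" "y \<in> {i, j, k, l}" for i j k l
  proof -
    have Y: "(int i, int j) \<in> Y" "(int k, int l) \<in> Y" using that(1,2) by (auto simp: polygon_part_def)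
    note ptolemy_infD[OF P Y, simplified]
    then have "(int x, int y) \<in> Y" using that(3-7) dg Y unfolding is_diagonal_Suc_iff by auto
    then show ?thesis using dg unfolding polygon_part_def is_diagonal_Suc_iff by auto
  qed
  from h consider "i < k" "k < j" "j < l" | "k < i" "i < l" "l < j" unfolding crosses_def by auto
  then show "(x, y) \<in> polygon_part Y N"
  proof cases
    case 1 then show ?thesis using ordered[of i j k l] h x y by blast
  next
    case 2 then show ?thesis using ordered[of k l i j] h x y by blast
  qed
qed

lemma block_arcs_polygon_part:
  assumes P: "ptolemy_inf Y" and nonneg: "\<And>a b. (a, b) \<in> Y \<Longrightarrow> 0 \<le> a"
    and arcN: "N \<ge> 2 \<Longrightarrow> (0, int N) \<in> Y"
  shows "{p \<in> Y. snd p \<le> int N} = block_arcs (polygon_part Y N) N"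
proof (rule set_eqI)
  fix p :: "int \<times> int"
  obtain a b where p: "p = (a, b)" by fastforce
  show "p \<in> {p \<in> Y. snd p \<le> int N} \<longleftrightarrow> p \<in> block_arcs (polygon_part Y N) N"
  proof
    assume "p \<in> {p \<in> Y. snd p \<le> int N}"
    then have ab: "(a, b) \<in> Y" "b \<le> int N" using p by auto
    have "0 \<le> a" "a + 2 \<le> b" using ab nonneg ptolemy_inf_arc[OF P ab(1)] by auto
    then show "p \<in> block_arcs (polygon_part Y N) N"
      using ab p by (auto simp: block_arcs_mem polygon_part_def)
  next
    assume "p \<in> block_arcs (polygon_part Y N) N"
    then show "p \<in> {p \<in> Y. snd p \<le> int N}"
      using arcN p by (auto simp: block_arcs_mem polygon_part_def)
  qed
qed

section \<open>Diagrams on a segment are sequences of polygon blocks\<close>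

definition in_segment :: "nat \<Rightarrow> (int \<times> int) set \<Rightarrow> bool" where
  "in_segment m Y \<longleftrightarrow> (\<forall>a b. (a, b) \<in> Y \<longrightarrow> 0 \<le> a \<and> b \<le> int m)"

definition segment_diagrams :: "nat \<Rightarrow> (int \<times> int) set set" where
  "segment_diagrams m = {Y. in_segment m Y \<and> ptolemy_inf Y}"

definition block_lists :: "nat \<Rightarrow> ((nat \<times> nat) set \<times> nat) list set" where
  "block_lists m = {qs. (\<forall>p\<in>set qs. snd p \<ge> 1 \<and> ptolemy_poly (snd p + 1) (fst p)) \<and>
                        sum_list (map snd qs) = m}"

fun glue :: "((nat \<times> nat) set \<times> nat) list \<Rightarrow> (int \<times> int) set" where
  "glue [] = {}"
| "glue (p # qs) = block_arcs (fst p) (snd p) \<union> shift (int (snd p)) (glue qs)"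

lemma block_lists_Nil: "[] \<in> block_lists m \<longleftrightarrow> m = 0"
  unfolding block_lists_def by auto

lemma block_lists_Cons:
  "(D, N) # qs \<in> block_lists m \<longleftrightarrow>
     N \<ge> 1 \<and> ptolemy_poly (N + 1) D \<and> N \<le> m \<and> qs \<in> block_lists (m - N)"
  unfolding block_lists_def by auto

lemma block_lists_nonempty:
  assumes "qs \<in> block_lists m" "0 < m"
  obtains D N qs' where "qs = (D, N) # qs'"
  using assms by (cases qs) (auto simp: block_lists_Nil)

lemma glue_segment: "qs \<in> block_lists m \<Longrightarrow> glue qs \<in> segment_diagrams m"
proof (induction qs arbitrary: m)
  case Nil then show ?case by (simp add: segment_diagrams_def in_segment_def ptolemy_inf_empty)
next
  case (Cons p qs)
  obtain D N where p: "p = (D, N)" by fastforce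
  from Cons.prems have h: "ptolemy_poly (N + 1) D" "N \<le> m" "qs \<in> block_lists (m - N)"
    unfolding p block_lists_Cons by auto
  have "glue qs \<in> segment_diagrams (m - N)" using Cons.IH h(3) .
  then have seg: "in_segment (m - N) (glue qs)" and P: "ptolemy_inf (glue qs)"
    unfolding segment_diagrams_def by auto
  have "ptolemy_inf (block_arcs D N \<union> shift (int N) (glue qs))"
  proof (rule ptolemy_inf_union[where N = "int N"])
    show "ptolemy_inf (block_arcs D N)" using ptolemy_inf_block_arcs[OF h(1)] .
    show "ptolemy_inf (shift (int N) (glue qs))" using ptolemy_inf_shift[OF P] .
    show "\<And>a b. (a, b) \<in> block_arcs D N \<Longrightarrow> b \<le> int N" using block_arcs_bounds[OF h(1)] by blast
    show "\<And>a b. (a, b) \<in> shift (int N) (glue qs) \<Longrightarrow> int N \<le> a"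
      using seg unfolding in_segment_def by force
  qed
  moreover have "in_segment m (block_arcs D N \<union> shift (int N) (glue qs))"
    unfolding in_segment_def
  proof (intro allI impI)
    fix a b assume "(a, b) \<in> block_arcs D N \<union> shift (int N) (glue qs)"
    then show "0 \<le> a \<and> b \<le> int m"
    proof
      assume "(a, b) \<in> block_arcs D N" then show ?thesis using block_arcs_bounds[OF h(1)] h(2) by force
    next
      assume "(a, b) \<in> shift (int N) (glue qs)"
      then show ?thesis using seg h(2) unfolding in_segment_def by force
    qed
  qed
  ultimately show ?case unfolding segment_diagrams_def p by simp
qed

lemma glue_Cons_uncovered:
  assumes "(D, N) # qs \<in> block_lists m" shows "\<not> covered (glue ((D, N) # qs)) (int N)"
proof -
  from assms have P: "ptolemy_poly (N + 1) D" and "qs \<in> block_lists (m - N)"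
    unfolding block_lists_Cons by auto
  then have "in_segment (m - N) (glue qs)" using glue_segment unfolding segment_diagrams_def by auto
  then show ?thesis
    unfolding covered_def using block_arcs_bounds[OF P] by (force simp: in_segment_def)
qed

lemma glue_Cons_parts:
  assumes "(D, N) # qs \<in> block_lists m"
  shows "{p \<in> glue ((D, N) # qs). snd p \<le> int N} = block_arcs D N"
    and "{p \<in> glue ((D, N) # qs). int N \<le> fst p} = shift (int N) (glue qs)"
proof -
  from assms have P: "ptolemy_poly (N + 1) D" and "qs \<in> block_lists (m - N)"
    unfolding block_lists_Cons by auto
  then have "glue qs \<in> segment_diagrams (m - N)" using glue_segment by blast
  then have seg: "in_segment (m - N) (glue qs)" and Pq: "ptolemy_inf (glue qs)"
    unfolding segment_diagrams_def by auto
  have right: "int N + 2 \<le> b" if "(a, b) \<in> shift (int N) (glue qs)" for a b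
    using that seg ptolemy_inf_arc[OF Pq, of "a - int N" "b - int N"] unfolding in_segment_def by force
  show "{p \<in> glue ((D, N) # qs). snd p \<le> int N} = block_arcs D N"
  proof (rule set_eqI)
    fix p :: "int \<times> int"
    show "p \<in> {p \<in> glue ((D, N) # qs). snd p \<le> int N} \<longleftrightarrow> p \<in> block_arcs D N"
      using right[of "fst p" "snd p"] block_arcs_bounds[OF P, of "fst p" "snd p"] by auto
  qed
  show "{p \<in> glue ((D, N) # qs). int N \<le> fst p} = shift (int N) (glue qs)"
    using seg block_arcs_bounds[OF P] unfolding in_segment_def by force
qed

lemma glue_Cons_arc: "N \<ge> 2 \<Longrightarrow> (0, int N) \<in> glue ((D, N) # qs)"
  by (simp add: block_arcs_mem)

text \<open>The first block of a glued diagram ends at its first positive uncovered vertex: a longer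
  first block of another gluing would have its enclosing arc cover that vertex.\<close>
lemma glue_first_block_size:
  assumes "(D, N) # qs \<in> block_lists m" "(D', N') # qs' \<in> block_lists m'"
    and eq: "glue ((D, N) # qs) = glue ((D', N') # qs')"
  shows "N' \<le> N"
proof (rule ccontr)
  assume less: "\<not> N' \<le> N"
  have "N \<ge> 1" using assms(1) by (simp add: block_lists_Cons)
  then have "(0, int N') \<in> glue ((D, N) # qs)" using eq glue_Cons_arc[of N' D' qs'] less by simp
  then have "covered (glue ((D, N) # qs)) (int N)"
    unfolding covered_def using less \<open>N \<ge> 1\<close> by (intro exI[of _ 0] exI[of _ "int N'"]) simp
  then show False using glue_Cons_uncovered[OF assms(1)] by simp
qed

lemma glue_inj:
  "qs \<in> block_lists m \<Longrightarrow> qs' \<in> block_lists m \<Longrightarrow> glue qs = glue qs' \<Longrightarrow> qs = qs'"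
proof (induction qs arbitrary: qs' m)
  case Nil
  then show ?case by (cases qs') (auto simp: block_lists_Nil block_lists_Cons)
next
  case (Cons p qs)
  obtain D N where p: "p = (D, N)" by fastforce
  from Cons.prems(1) have h: "N \<ge> 1" "ptolemy_poly (N + 1) D" "N \<le> m" "qs \<in> block_lists (m - N)"
    unfolding block_lists_Cons p by auto
  then obtain D' N' qs2 where q': "qs' = (D', N') # qs2"
    using block_lists_nonempty[OF Cons.prems(2)] by force
  from Cons.prems(2) have h': "ptolemy_poly (N' + 1) D'" "qs2 \<in> block_lists (m - N')"
    unfolding block_lists_Cons q' by auto
  note A = Cons.prems(1)[unfolded p] and B = Cons.prems(2)[unfolded q']
    and eq = Cons.prems(3)[unfolded p q']
  have NN: "N = N'"
    using glue_first_block_size[OF A B eq] glue_first_block_size[OF B A eq[symmetric]] by simp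
  note parts = glue_Cons_parts[OF A] and parts' = glue_Cons_parts[OF B[unfolded NN[symmetric]]]
  have "block_arcs D N = block_arcs D' N"
    using parts(1) parts'(1) eq NN by (simp del: glue.simps)
  then have "D = D'" using block_arcs_inj h(2) h'(1) NN by blast
  moreover have "shift (int N) (glue qs) = shift (int N) (glue qs2)"
    using parts(2) parts'(2) eq NN by (simp del: glue.simps)
  then have "qs = qs2" using Cons.IH h(4) h'(2) NN shift_inj by blast
  ultimately show ?case using p q' NN by simp
qed

lemma first_uncovered:
  assumes "in_segment m Y" "0 < m"
  obtains N where "0 < N" "N \<le> m" "\<not> covered Y (int N)" "\<And>v. 0 < v \<Longrightarrow> v < int N \<Longrightarrow> covered Y v"
proof -
  define good where "good N \<longleftrightarrow> 0 < N \<and> \<not> covered Y (int N)" for N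
  have "good m" using assms unfolding good_def in_segment_def covered_def by force
  define N where "N = (LEAST N. good N)"
  have "good N" unfolding N_def by (rule LeastI) fact
  moreover have "N \<le> m" unfolding N_def by (rule Least_le) fact
  moreover have "covered Y v" if "0 < v" "v < int N" for v
    using not_less_Least[of "nat v" good] that unfolding N_def good_def by auto
  ultimately show ?thesis using that unfolding good_def by auto
qed

lemma segment_split:
  assumes Y: "Y \<in> segment_diagrams m" and N: "0 < N" "N \<le> m" "\<not> covered Y (int N)"
    and cov: "\<And>v. 0 < v \<Longrightarrow> v < int N \<Longrightarrow> covered Y v"
  defines "R \<equiv> shift (- int N) {p \<in> Y. int N \<le> fst p \<and> snd p \<le> int m}"
  shows "Y = block_arcs (polygon_part Y N) N \<union> shift (int N) R" and "R \<in> segment_diagrams (m - N)"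
proof -
  have seg: "in_segment m Y" and P: "ptolemy_inf Y" using Y unfolding segment_diagrams_def by auto
  have nonneg: "\<And>a b. (a, b) \<in> Y \<Longrightarrow> 0 \<le> a" using seg unfolding in_segment_def by blast
  have arcN: "(0, int N) \<in> Y" if "N \<ge> 2" using first_block_arc[OF P nonneg N(3) _ cov] that by auto
  have cut: "snd p \<le> int N \<or> int N \<le> fst p" if "p \<in> Y" for p
  proof -
    have "\<not> (fst p < int N \<and> int N < snd p)"
      using N(3) that unfolding covered_def by (metis prod.collapse)
    then show ?thesis by linarith
  qed
  have "shift (int N) R = {p \<in> Y. int N \<le> fst p \<and> snd p \<le> int m}"
    unfolding R_def by simp
  also have "\<dots> = {p \<in> Y. int N \<le> fst p}"
  proof (rule Collect_cong)
    fix p show "(p \<in> Y \<and> int N \<le> fst p \<and> snd p \<le> int m) \<longleftrightarrow> (p \<in> Y \<and> int N \<le> fst p)"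
      using seg unfolding in_segment_def by (cases p) auto
  qed
  finally have right: "shift (int N) R = {p \<in> Y. int N \<le> fst p}" .
  have "Y = {p \<in> Y. snd p \<le> int N} \<union> {p \<in> Y. int N \<le> fst p}" using cut by auto
  also have "\<dots> = block_arcs (polygon_part Y N) N \<union> shift (int N) R"
    using block_arcs_polygon_part[OF P nonneg arcN] right by simp
  finally show "Y = block_arcs (polygon_part Y N) N \<union> shift (int N) R" .
  have "ptolemy_inf R" unfolding R_def by (intro ptolemy_inf_shift ptolemy_inf_restrict P)
  moreover have "in_segment (m - N) R" unfolding in_segment_def R_def using N(2) by (auto simp: of_nat_diff)
  ultimately show "R \<in> segment_diagrams (m - N)" unfolding segment_diagrams_def by simp
qed

lemma glue_surj: "Y \<in> segment_diagrams m \<Longrightarrow> \<exists>qs \<in> block_lists m. glue qs = Y"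
proof (induction m arbitrary: Y rule: less_induct)
  case (less m)
  have seg: "in_segment m Y" and P: "ptolemy_inf Y" using less.prems unfolding segment_diagrams_def by auto
  show ?case
  proof (cases "m = 0")
    case True
    then have "Y = {}" using seg ptolemy_inf_arc[OF P] unfolding in_segment_def by fastforce
    then show ?thesis using True by (intro bexI[of _ "[]"]) (auto simp: block_lists_Nil)
  next
    case False
    then obtain N where N: "0 < N" "N \<le> m" "\<not> covered Y (int N)"
      and cov: "\<And>v. 0 < v \<Longrightarrow> v < int N \<Longrightarrow> covered Y v"
      using first_uncovered[OF seg] by blast
    define R where "R = shift (- int N) {p \<in> Y. int N \<le> fst p \<and> snd p \<le> int m}"
    note split = segment_split[OF less.prems N cov, folded R_def]
    obtain qs where qs: "qs \<in> block_lists (m - N)" "glue qs = R"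
      using less.IH[OF _ split(2)] N by auto
    have "(polygon_part Y N, N) # qs \<in> block_lists m"
      unfolding block_lists_Cons using N ptolemy_poly_polygon_part[OF P] qs by auto
    moreover have "glue ((polygon_part Y N, N) # qs) = Y" using split(1) qs by simp
    ultimately show ?thesis by blast
  qed
qed

section \<open>Periodic diagrams\<close>

definition periodize :: "nat \<Rightarrow> (int \<times> int) set \<Rightarrow> (int \<times> int) set" where
  "periodize n Y = (\<Union>t. shift (t * int n) Y)"

definition periodic_diagrams :: "nat \<Rightarrow> (int \<times> int) set set" where
  "periodic_diagrams n =
     {X. periodic_arcs (int n) X \<and> ptolemy_inf X \<and> (\<forall>a\<in>X. arc_length a \<le> int n)}"

lemma periodize_mem: "(a, b) \<in> periodize n Y \<longleftrightarrow> (\<exists>t. (a - t * int n, b - t * int n) \<in> Y)"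
  unfolding periodize_def by auto

lemma subset_periodize: "Y \<subseteq> periodize n Y"
  unfolding periodize_def by (intro subsetI UN_I[of 0]) auto

lemma periodic_arcsD: "periodic_arcs n X \<Longrightarrow> (i, j) \<in> X \<Longrightarrow> (i + t * n, j + t * n) \<in> X"
  unfolding periodic_arcs_def by blast

lemma periodic_uncovered:
  assumes "periodic_arcs n X" "\<not> covered X v" shows "\<not> covered X (v + t * n)"
proof
  assume "covered X (v + t * n)"
  then obtain a b where ab: "(a, b) \<in> X" "a < v + t * n" "v + t * n < b" unfolding covered_def by auto
  have "(a + (- t) * n, b + (- t) * n) \<in> X" using periodic_arcsD[OF assms(1) ab(1)] .
  then have "covered X v" unfolding covered_def using ab
    by (intro exI[of _ "a + (- t) * n"] exI[of _ "b + (- t) * n"]) (auto simp: algebra_simps)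
  then show False using assms(2) by simp
qed

lemma periodic_diagrams_shift:
  assumes "X \<in> periodic_diagrams n" shows "shift d X \<in> periodic_diagrams n"
proof -
  have per: "periodic_arcs (int n) X" and P: "ptolemy_inf X" and L: "\<forall>a\<in>X. arc_length a \<le> int n"
    using assms unfolding periodic_diagrams_def by auto
  have "periodic_arcs (int n) (shift d X)" unfolding periodic_arcs_def
  proof (intro allI impI)
    fix i j t assume "(i, j) \<in> shift d X"
    from periodic_arcsD[OF per, of "i - d" "j - d" t] this
    show "(i + t * int n, j + t * int n) \<in> shift d X" by (simp add: algebra_simps)
  qed
  moreover have "arc_length a \<le> int n" if "a \<in> shift d X" for a
    using that L unfolding arc_length_def by (cases a) force
  ultimately show ?thesis using ptolemy_inf_shift[OF P] unfolding periodic_diagrams_def by blast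
qed

lemma translate_index_le:
  fixes t u :: int assumes "0 < n" "t * int n < u * int n + int n" shows "t \<le> u"
proof -
  have "t * int n < (u + 1) * int n" using assms(2) by (simp add: algebra_simps)
  then show ?thesis using assms(1) by (simp add: mult_less_cancel_right)
qed

lemma translate_window:
  assumes "in_segment n Y" "(a - t * int n, b - t * int n) \<in> Y"
  shows "t * int n \<le> a" "b \<le> t * int n + int n"
  using assms unfolding in_segment_def by force+

text \<open>Every arc of the periodized diagram lies in exactly one window [tn, (t+1)n]; in
  particular its vertices 0 (mod n) are uncovered, and inside [0, n] it agrees with Y.\<close>
lemma periodize_uncovered_0:
  assumes seg: "in_segment n Y" and n: "0 < n" shows "\<not> covered (periodize n Y) 0"
proof
  assume "covered (periodize n Y) 0"
  then obtain a b t where ab: "(a - t * int n, b - t * int n) \<in> Y" "a < 0" "0 < b"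
    unfolding covered_def periodize_mem by auto
  note w = translate_window[OF seg ab(1)]
  have "t \<le> -1" using translate_index_le[OF n, of t "-1"] w ab by linarith
  moreover have "0 \<le> t" using translate_index_le[OF n, of 0 t] w ab by linarith
  ultimately show False by simp
qed

lemma periodize_covered_inner:
  assumes seg: "in_segment n Y" and n: "0 < n" and v: "0 < v" "v < int n"
    and "covered (periodize n Y) v"
  shows "covered Y v"
proof -
  obtain a b t where ab: "(a - t * int n, b - t * int n) \<in> Y" "a < v" "v < b"
    using assms(5) unfolding covered_def periodize_mem by auto
  note w = translate_window[OF seg ab(1)]
  have "t \<le> 0" using translate_index_le[OF n, of t 0] w ab v by linarith
  moreover have "0 \<le> t" using translate_index_le[OF n, of 0 t] w ab v by linarith
  ultimately show ?thesis using ab unfolding covered_def by auto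
qed

lemma periodize_window:
  assumes Y: "Y \<in> segment_diagrams n" and n: "0 < n"
  shows "{p \<in> periodize n Y. 0 \<le> fst p \<and> snd p \<le> int n} = Y"
proof (rule set_eqI)
  have seg: "in_segment n Y" and P: "ptolemy_inf Y" using Y unfolding segment_diagrams_def by auto
  fix p :: "int \<times> int"
  obtain a b where p: "p = (a, b)" by fastforce
  show "p \<in> {p \<in> periodize n Y. 0 \<le> fst p \<and> snd p \<le> int n} \<longleftrightarrow> p \<in> Y"
  proof
    assume "p \<in> {p \<in> periodize n Y. 0 \<le> fst p \<and> snd p \<le> int n}"
    then obtain t where ab: "(a - t * int n, b - t * int n) \<in> Y" "0 \<le> a" "b \<le> int n"
      unfolding p by (auto simp: periodize_mem)
    note w = translate_window[OF seg ab(1)]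
    have l: "b - a \<ge> 2" using ptolemy_inf_arc[OF P ab(1)] by simp
    have "t \<le> 0" using translate_index_le[OF n, of t 0] w ab l by linarith
    moreover have "0 \<le> t" using translate_index_le[OF n, of 0 t] w ab l by linarith
    ultimately show "p \<in> Y" using ab p by simp
  next
    assume "p \<in> Y"
    then show "p \<in> {p \<in> periodize n Y. 0 \<le> fst p \<and> snd p \<le> int n}"
      using subset_periodize seg p unfolding in_segment_def by auto
  qed
qed

lemma periodize_crossing_same_copy:
  assumes seg: "in_segment n Y" and n: "0 < n"
    and t: "(i - t * int n, j - t * int n) \<in> Y" and u: "(r - u * int n, s - u * int n) \<in> Y"
    and "i < r" "r < j" "j < s"
  shows "u = t"
proof -
  note wt = translate_window[OF seg t] and wu = translate_window[OF seg u]
  have "u \<le> t" using translate_index_le[OF n, of u t] wt wu assms(5-7) by linarith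
  moreover have "t \<le> u" using translate_index_le[OF n, of t u] wt wu assms(5-7) by linarith
  ultimately show "u = t" by simp
qed

lemma ptolemy_inf_periodize:
  assumes seg: "in_segment n Y" and P: "ptolemy_inf Y" and n: "0 < n"
  shows "ptolemy_inf (periodize n Y)"
proof (rule ptolemy_infI)
  fix a b assume "(a, b) \<in> periodize n Y"
  then obtain t where "(a - t * int n, b - t * int n) \<in> Y" unfolding periodize_mem by auto
  then show "b - a \<ge> 2" using ptolemy_inf_arc[OF P] by force
next
  fix i j r s assume h: "(i, j) \<in> periodize n Y" "(r, s) \<in> periodize n Y" "i < r" "r < j" "j < s"
  obtain t where t: "(i - t * int n, j - t * int n) \<in> Y" using h(1) unfolding periodize_mem by auto
  obtain u where u: "(r - u * int n, s - u * int n) \<in> Y" using h(2) unfolding periodize_mem by auto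
  have "u = t" using periodize_crossing_same_copy[OF seg n t u h(3-5)] .
  then have "(i, j) \<in> shift (t * int n) Y" "(r, s) \<in> shift (t * int n) Y" using t u by auto
  note cross = ptolemy_infD[OF ptolemy_inf_shift[OF P] this h(3-5)]
  have "shift (t * int n) Y \<subseteq> periodize n Y" unfolding periodize_def by blast
  with cross show "(i, s) \<in> periodize n Y \<and> (r - i \<ge> 2 \<longrightarrow> (i, r) \<in> periodize n Y) \<and>
      (j - r \<ge> 2 \<longrightarrow> (r, j) \<in> periodize n Y) \<and> (s - j \<ge> 2 \<longrightarrow> (j, s) \<in> periodize n Y)"
    by blast
qed

lemma periodize_periodic_diagram:
  assumes Y: "Y \<in> segment_diagrams n" and n: "0 < n" shows "periodize n Y \<in> periodic_diagrams n"
proof -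
  have seg: "in_segment n Y" and P: "ptolemy_inf Y" using Y unfolding segment_diagrams_def by auto
  have "periodic_arcs (int n) (periodize n Y)"
    unfolding periodic_arcs_def
  proof (intro allI impI)
    fix i j t assume "(i, j) \<in> periodize n Y"
    then obtain u where "(i - u * int n, j - u * int n) \<in> Y" unfolding periodize_mem by auto
    then have "(i + t * int n - (u + t) * int n, j + t * int n - (u + t) * int n) \<in> Y"
      by (simp add: algebra_simps)
    then show "(i + t * int n, j + t * int n) \<in> periodize n Y" unfolding periodize_mem by blast
  qed
  moreover have "arc_length p \<le> int n" if pY: "p \<in> periodize n Y" for p
  proof -
    obtain a b where p: "p = (a, b)" by fastforce
    then obtain t where "(a - t * int n, b - t * int n) \<in> Y"
      using pY by (auto simp: periodize_mem)
    then show ?thesis using translate_window[OF seg] unfolding p arc_length_def by force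
  qed
  ultimately show ?thesis
    using ptolemy_inf_periodize[OF seg P n] unfolding periodic_diagrams_def by blast
qed

lemma periodic_diagram_window:
  assumes X: "X \<in> periodic_diagrams n" and n: "0 < n" and u: "\<not> covered X 0"
  defines "Y \<equiv> {p \<in> X. 0 \<le> fst p \<and> snd p \<le> int n}"
  shows "Y \<in> segment_diagrams n" and "periodize n Y = X"
proof -
  have per: "periodic_arcs (int n) X" and P: "ptolemy_inf X"
    using X unfolding periodic_diagrams_def by auto
  show "Y \<in> segment_diagrams n"
    unfolding segment_diagrams_def in_segment_def Y_def using ptolemy_inf_restrict[OF P] by auto
  show "periodize n Y = X"
  proof (rule set_eqI)
    fix p :: "int \<times> int"
    obtain a b where p: "p = (a, b)" by fastforce
    show "p \<in> periodize n Y \<longleftrightarrow> p \<in> X"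
    proof
      assume "p \<in> periodize n Y"
      then obtain t where "(a - t * int n, b - t * int n) \<in> X" unfolding p periodize_mem Y_def by auto
      from periodic_arcsD[OF per this, of t] show "p \<in> X" using p by simp
    next
      assume pX: "p \<in> X"
      define t where "t = a div int n"
      have "t * int n + a mod int n = a" unfolding t_def by (rule div_mult_mod_eq)
      moreover have "0 \<le> a mod int n" "a mod int n < int n" using n by simp_all
      ultimately have t1: "t * int n \<le> a" "a < (t + 1) * int n" by (simp_all add: algebra_simps)
      have "\<not> covered X (0 + (t + 1) * int n)" by (rule periodic_uncovered[OF per u])
      then have "b \<le> (t + 1) * int n" using pX p t1 unfolding covered_def by force
      moreover have "(a + (- t) * int n, b + (- t) * int n) \<in> X" using periodic_arcsD[OF per] pX p by blast
      ultimately have "(a - t * int n, b - t * int n) \<in> Y" using t1 unfolding Y_def by (auto simp: algebra_simps)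
      then show "p \<in> periodize n Y" unfolding p periodize_mem by blast
    qed
  qed
qed

section \<open>Pointed block sequences versus periodic diagrams\<close>

definition pointed_block_lists :: "nat \<Rightarrow> (((nat \<times> nat) set \<times> nat) list \<times> nat) set" where
  "pointed_block_lists n = {(qs, k). qs \<in> block_lists n \<and> k < snd (hd qs)}"

text \<open>The periodic diagram of a pointed block sequence: glue, periodize, and translate so that
  the last uncovered vertex before 0 is -(k+1).\<close>
definition diagram_of :: "nat \<Rightarrow> ((nat \<times> nat) set \<times> nat) list \<times> nat \<Rightarrow> (int \<times> int) set" where
  "diagram_of n qk = shift (- (int (snd qk) + 1)) (periodize n (glue (fst qk)))"

lemma covered_diagram_of:
  "covered (diagram_of n (qs, k)) w \<longleftrightarrow> covered (periodize n (glue qs)) (w + int k + 1)"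
  unfolding diagram_of_def by (simp add: covered_shift algebra_simps)

text \<open>The point k is recovered from the diagram: -(k+1) is uncovered, and every vertex strictly
  between -(k+1) and 0 is covered (by the translate of the arc enclosing the first block).\<close>
lemma diagram_of_covered:
  assumes T: "(qs, k) \<in> pointed_block_lists n" and n: "0 < n"
  shows "\<not> covered (diagram_of n (qs, k)) (- (int k + 1))"
    and "\<And>w. - (int k + 1) < w \<Longrightarrow> w < 0 \<Longrightarrow> covered (diagram_of n (qs, k)) w"
proof -
  have Q: "qs \<in> block_lists n" and k: "k < snd (hd qs)"
    using T unfolding pointed_block_lists_def by auto
  have seg: "in_segment n (glue qs)" using glue_segment[OF Q] unfolding segment_diagrams_def by auto
  show "\<not> covered (diagram_of n (qs, k)) (- (int k + 1))"
    unfolding covered_diagram_of using periodize_uncovered_0[OF seg n] by simp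
  fix w assume w: "- (int k + 1) < w" "w < 0"
  obtain D N qs' where qs: "qs = (D, N) # qs'" using block_lists_nonempty[OF Q n] .
  have kN: "k < N" using k qs by simp
  then have "N \<ge> 2" using w by linarith
  then have "(0, int N) \<in> periodize n (glue qs)" using qs glue_Cons_arc subset_periodize by blast
  then have "covered (periodize n (glue qs)) (w + int k + 1)" unfolding covered_def using w kN
    by (intro exI[of _ 0] exI[of _ "int N"]) auto
  then show "covered (diagram_of n (qs, k)) w" unfolding covered_diagram_of .
qed

lemma diagram_of_periodic:
  assumes "(qs, k) \<in> pointed_block_lists n" "0 < n"
  shows "diagram_of n (qs, k) \<in> periodic_diagrams n"
proof -
  have "glue qs \<in> segment_diagrams n"
    using assms(1) glue_segment unfolding pointed_block_lists_def by auto
  then show ?thesis unfolding diagram_of_def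
    using periodic_diagrams_shift periodize_periodic_diagram assms(2) by auto
qed

lemma diagram_of_inj:
  assumes n: "0 < n" shows "inj_on (diagram_of n) (pointed_block_lists n)"
proof (rule inj_onI)
  fix x y assume x: "x \<in> pointed_block_lists n" and y: "y \<in> pointed_block_lists n"
    and eq: "diagram_of n x = diagram_of n y"
  obtain qs k where xx: "x = (qs, k)" by fastforce
  obtain qs' k' where yy: "y = (qs', k')" by fastforce
  note cx = diagram_of_covered[OF x[unfolded xx] n] and cy = diagram_of_covered[OF y[unfolded yy] n]
  have kk: "k = k'"
  proof (rule ccontr)
    assume "k \<noteq> k'"
    then consider "k < k'" | "k' < k" by linarith
    then show False
    proof cases
      case 1 then show False using cx(1) cy(2)[of "- (int k + 1)"] eq xx yy by auto
    next
      case 2 then show False using cy(1) cx(2)[of "- (int k' + 1)"] eq xx yy by auto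
    qed
  qed
  have Q: "qs \<in> block_lists n" "qs' \<in> block_lists n"
    using x y xx yy unfolding pointed_block_lists_def by auto
  have "periodize n (glue qs) = periodize n (glue qs')"
    using eq xx yy kk unfolding diagram_of_def by (auto dest: shift_inj)
  then have "{p \<in> periodize n (glue qs). 0 \<le> fst p \<and> snd p \<le> int n} =
             {p \<in> periodize n (glue qs'). 0 \<le> fst p \<and> snd p \<le> int n}" by simp
  then have "glue qs = glue qs'"
    unfolding periodize_window[OF glue_segment[OF Q(1)] n] periodize_window[OF glue_segment[OF Q(2)] n] .
  then have "qs = qs'" using glue_inj Q by blast
  then show "x = y" using xx yy kk by simp
qed

lemma last_uncovered_below_0:
  assumes X: "X \<in> periodic_diagrams n" and n: "0 < n"
  obtains c where "- int n \<le> c" "c \<le> -1" "\<not> covered X c" "\<And>w. c < w \<Longrightarrow> w < 0 \<Longrightarrow> covered X w"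
proof -
  have per: "periodic_arcs (int n) X" and P: "ptolemy_inf X" and L: "\<forall>a\<in>X. arc_length a \<le> int n"
    using X unfolding periodic_diagrams_def by auto
  obtain v where v: "\<not> covered X v" using exists_uncovered[OF P L] by blast
  define S where "S = {w \<in> {- int n..-1}. \<not> covered X w}"
  define w0 where "w0 = v + (- (v div int n) - 1) * int n"
  have "w0 = v mod int n - int n" unfolding w0_def by (simp add: algebra_simps minus_div_mult_eq_mod)
  moreover have "0 \<le> v mod int n" "v mod int n < int n" using n by simp_all
  ultimately have "w0 \<in> {- int n..-1}" by simp
  moreover have "\<not> covered X w0" unfolding w0_def by (rule periodic_uncovered[OF per v])
  ultimately have "w0 \<in> S" unfolding S_def by auto
  have finS: "finite S" unfolding S_def by (rule finite_subset[of _ "{- int n..-1}"]) auto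
  define c where "c = Max S"
  have "c \<in> S" unfolding c_def using finS \<open>w0 \<in> S\<close> by (intro Max_in) auto
  moreover have "covered X w" if "c < w" "w < 0" for w
  proof (rule ccontr)
    assume "\<not> covered X w"
    then have "w \<in> S" using that \<open>c \<in> S\<close> unfolding S_def by auto
    then show False using Max_ge[OF finS] that unfolding c_def by fastforce
  qed
  ultimately show ?thesis using that unfolding S_def by auto
qed

text \<open>Every periodic diagram arises: translate its last uncovered vertex -(k+1) before 0 to 0,
  cut out the window [0, n] and decompose it into blocks; the first block is longer than k.\<close>
lemma diagram_of_surj:
  assumes X: "X \<in> periodic_diagrams n" and n: "0 < n" shows "X \<in> diagram_of n ` pointed_block_lists n"
proof -
  obtain c where c: "- int n \<le> c" "c \<le> -1" "\<not> covered X c"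
    and cov: "\<And>w. c < w \<Longrightarrow> w < 0 \<Longrightarrow> covered X w"
    using last_uncovered_below_0[OF X n] by blast
  define k where "k = nat (- c - 1)"
  have kc: "- (int k + 1) = c" unfolding k_def using c by simp
  define X0 where "X0 = shift (- c) X"
  have X0: "X0 \<in> periodic_diagrams n" unfolding X0_def using periodic_diagrams_shift[OF X] .
  have u0: "\<not> covered X0 0" unfolding X0_def covered_shift using c by simp
  define Y where "Y = {p \<in> X0. 0 \<le> fst p \<and> snd p \<le> int n}"
  have Y: "Y \<in> segment_diagrams n" and pY: "periodize n Y = X0"
    using periodic_diagram_window[OF X0 n u0] unfolding Y_def by auto
  obtain qs where qs: "qs \<in> block_lists n" "glue qs = Y" using glue_surj[OF Y] by blast
  obtain D N qs' where qsc: "qs = (D, N) # qs'" using block_lists_nonempty[OF qs(1) n] .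
  have N1: "1 \<le> N" using qs(1) unfolding qsc block_lists_Cons by auto
  have "k < N"
  proof (rule ccontr)
    assume "\<not> k < N"
    then have kN: "N \<le> k" by simp
    have "\<not> covered Y (int N)" using glue_Cons_uncovered qs qsc by blast
    then have "\<not> covered X0 (int N)"
      using periodize_covered_inner[of n Y "int N"] pY n Y N1 kN kc c
      unfolding segment_diagrams_def by auto
    then have "\<not> covered X (int N + c)" unfolding X0_def covered_shift by simp
    then show False using cov[of "int N + c"] N1 kN kc by linarith
  qed
  then have T: "(qs, k) \<in> pointed_block_lists n" unfolding pointed_block_lists_def using qs qsc by simp
  have "diagram_of n (qs, k) = shift c (shift (- c) X)" unfolding diagram_of_def using qs pY kc X0_def by simp
  then have "diagram_of n (qs, k) = X" by simp
  then show ?thesis using T by (metis image_eqI)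
qed

theorem diagram_of_bij:
  assumes "0 < n" shows "bij_betw (diagram_of n) (pointed_block_lists n) (periodic_diagrams n)"
  unfolding bij_betw_def
  using diagram_of_inj[OF assms] diagram_of_periodic[OF _ assms] diagram_of_surj[OF _ assms] by auto

section \<open>Cyclic orders of labelled blocks and pointed block lists\<close>

definition rotations :: "'b list \<Rightarrow> 'b list set" where
  "rotations ps = {rotate k ps | k. True}"

lemma rotations_rotate: "rotations (rotate i ps) = rotations ps"
proof -
  have "rotate j ps \<in> rotations (rotate i ps)" for j
  proof (cases "ps = []")
    case True then show ?thesis unfolding rotations_def by auto
  next
    case False
    define l where "l = length ps"
    have l0: "0 < l" using False unfolding l_def by simp
    define m where "m = j + (l - i mod l)"
    have "m + i = j + (l - i mod l + i mod l) + l * (i div l)" unfolding m_def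
      by (metis add.assoc add.commute div_mult_mod_eq mult.commute)
    also have "\<dots> = j + (i div l + 1) * l" using mod_less_divisor[OF l0, of i] by (simp add: algebra_simps)
    finally have "(m + i) mod l = j mod l" by (metis mod_mult_self1)
    then have "rotate m (rotate i ps) = rotate j ps"
      unfolding rotate_rotate by (metis rotate_conv_mod l_def)
    then show ?thesis unfolding rotations_def by (intro CollectI exI[of _ m]) simp
  qed
  moreover have "rotate j (rotate i ps) \<in> rotations ps" for j
    unfolding rotations_def rotate_rotate by blast
  ultimately show ?thesis unfolding rotations_def by blast
qed

lemma distinct_concat_rotate: "distinct (concat (rotate i xss)) = distinct (concat xss)"
proof -
  define m where "m = i mod length xss"
  have "rotate i xss = drop m xss @ take m xss" unfolding m_def by (rule rotate_drop_take)
  moreover have "concat xss = concat (take m xss) @ concat (drop m xss)"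
    by (metis append_take_drop_id concat_append)
  ultimately show ?thesis by (auto simp: distinct_append)
qed

lemma CP_valid_rotate: "CP_valid U ps \<Longrightarrow> CP_valid U (rotate i ps)"
  unfolding CP_valid_def by (simp add: rotate_map[symmetric] distinct_concat_rotate)

lemma distinct_concat_block_unique:
  "distinct (concat xss) \<Longrightarrow> i < length xss \<Longrightarrow> j < length xss \<Longrightarrow>
    x \<in> set (xss ! i) \<Longrightarrow> x \<in> set (xss ! j) \<Longrightarrow> i = j"
proof (induction xss arbitrary: i j)
  case (Cons ys xss)
  show ?case
  proof (cases i)
    case 0
    then show ?thesis using Cons.prems by (cases j) (auto dest: nth_mem)
  next
    case (Suc i')
    show ?thesis
    proof (cases j)
      case 0 then show ?thesis using Cons.prems Suc by (auto dest: nth_mem)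
    next
      case (Suc j') then show ?thesis using Cons.IH[of i' j'] Cons.prems \<open>i = Suc i'\<close> by auto
    qed
  qed
qed simp

lemma P_struct_self:
  "p \<in> P_struct (set (snd p)) \<longleftrightarrow>
     distinct (snd p) \<and> snd p \<noteq> [] \<and> ptolemy_poly (length (snd p) + 1) (fst p)"
  by (cases p) (simp add: P_struct_def)

text \<open>A representative of a cyclic order, rotated so that the marked label lies in the first
  block, together with the position of the mark in that block.\<close>
definition pointed_lists :: "'a set \<Rightarrow> (((nat \<times> nat) set \<times> 'a list) list \<times> nat) set" where
  "pointed_lists U = {(ps, k). CP_valid U ps \<and> k < length (snd (hd ps))}"

definition mark :: "((nat \<times> nat) set \<times> 'a list) list \<times> nat \<Rightarrow>
    ((nat \<times> nat) set \<times> 'a list) list set \<times> 'a" where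
  "mark pk = (rotations (fst pk), snd (hd (fst pk)) ! snd pk)"

text \<open>Rotating a representative moves the marked block to the front; since labels are
  distinct, the block and the position are determined by the marked label.\<close>
lemma mark_inj: "inj_on mark (pointed_lists U)"
proof (rule inj_onI)
  fix x y assume "x \<in> pointed_lists U" "y \<in> pointed_lists U" and eq: "mark x = mark y"
  then obtain ps k ps' k' where x: "x = (ps, k)" and y: "y = (ps', k')"
    and V: "CP_valid U ps" "k < length (snd (hd ps))"
    and k': "k' < length (snd (hd ps'))"
    unfolding pointed_lists_def by auto
  have "rotations ps = rotations ps'" and u: "snd (hd ps) ! k = snd (hd ps') ! k'"
    using eq x y unfolding mark_def by auto
  moreover have "ps' \<in> rotations ps'" unfolding rotations_def by (intro CollectI exI[of _ 0]) simp
  ultimately obtain j where j: "ps' = rotate j ps" unfolding rotations_def by auto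
  have ne: "ps \<noteq> []" and dc: "distinct (concat (map snd ps))" using V unfolding CP_valid_def by auto
  have "snd (hd ps) ! k \<in> set (map snd ps ! 0)" using V(2) ne by (simp add: hd_conv_nth)
  moreover have "snd (hd ps) ! k \<in> set (map snd ps ! (j mod length ps))"
    using u k' j ne by (simp add: hd_rotate_conv_nth)
  ultimately have "0 = j mod length ps"
    using distinct_concat_block_unique[OF dc, of 0 "j mod length ps"] ne by simp
  then have pp: "ps' = ps" using j by (metis rotate_conv_mod rotate0 id_apply)
  have "distinct (snd (hd ps))" using V ne unfolding CP_valid_def P_struct_self by auto
  then have "k = k'" using u pp V(2) k' by (simp add: nth_eq_iff_index_eq)
  then show "x = y" using x y pp by simp
qed

text \<open>Every pointed structure arises by rotating the block of the marked label to the front.\<close>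
lemma mark_image: "mark ` pointed_lists U = CP_pointed U"
proof
  show "mark ` pointed_lists U \<subseteq> CP_pointed U"
  proof
    fix z assume "z \<in> mark ` pointed_lists U"
    then obtain ps k where V: "CP_valid U ps" "k < length (snd (hd ps))" and z: "z = mark (ps, k)"
      unfolding pointed_lists_def by auto
    have ne: "ps \<noteq> []" using V unfolding CP_valid_def by simp
    have "set (snd (hd ps)) \<subseteq> U" using V ne unfolding CP_valid_def by (auto simp: hd_in_set)
    then have "snd (hd ps) ! k \<in> U" using nth_mem[OF V(2)] by blast
    moreover have "rotations ps \<in> CP_struct U" unfolding CP_struct_def rotations_def using V by blast
    ultimately show "z \<in> CP_pointed U" unfolding z mark_def CP_pointed_def by simp
  qed
next
  show "CP_pointed U \<subseteq> mark ` pointed_lists U"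
  proof
    fix z assume "z \<in> CP_pointed U"
    then obtain ps u where z: "z = (rotations ps, u)" and V: "CP_valid U ps" and "u \<in> U"
      unfolding CP_pointed_def CP_struct_def rotations_def by auto
    then have "u \<in> set (concat (map snd ps))" unfolding CP_valid_def by simp
    then obtain xs where xs: "xs \<in> set (map snd ps)" "u \<in> set xs" by auto
    then obtain i where "i < length ps" "xs = snd (ps ! i)" by (auto simp: in_set_conv_nth)
    then have i: "i < length ps" "u \<in> set (snd (ps ! i))" using xs by auto
    define ps2 where "ps2 = rotate i ps"
    have "ps \<noteq> []" using i by auto
    then have "hd ps2 = ps ! i" unfolding ps2_def using i by (simp add: hd_rotate_conv_nth)
    then obtain k where k: "k < length (snd (hd ps2))" "snd (hd ps2) ! k = u"
      using i by (auto simp: in_set_conv_nth)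
    have "(ps2, k) \<in> pointed_lists U" unfolding pointed_lists_def ps2_def using CP_valid_rotate[OF V] k
      by (simp add: ps2_def)
    moreover have "mark (ps2, k) = z" unfolding mark_def z ps2_def using k rotations_rotate ps2_def by simp
    ultimately show "z \<in> mark ` pointed_lists U" by (metis image_eqI)
  qed
qed

definition label_orders :: "'a set \<Rightarrow> 'a list set" where
  "label_orders U = {L. distinct L \<and> set L = U}"

lemma label_orders_length: "L \<in> label_orders U \<Longrightarrow> length L = card U"
  unfolding label_orders_def using distinct_card by fastforce

definition forget_labels :: "((nat \<times> nat) set \<times> 'a list) list \<times> nat \<Rightarrow>
    (((nat \<times> nat) set \<times> nat) list \<times> nat) \<times> 'a list" where
  "forget_labels pk =
     ((map (\<lambda>p. (fst p, length (snd p))) (fst pk), snd pk), concat (map snd (fst pk)))"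

fun distribute :: "('b \<times> nat) list \<Rightarrow> 'a list \<Rightarrow> ('b \<times> 'a list) list" where
  "distribute [] L = []"
| "distribute (q # qs) L = (fst q, take (snd q) L) # distribute qs (drop (snd q) L)"

lemma distribute_inverse:
  "sum_list (map snd qs) = length L \<Longrightarrow>
    map (\<lambda>p. (fst p, length (snd p))) (distribute qs L) = qs \<and> concat (map snd (distribute qs L)) = L"
proof (induction qs arbitrary: L)
  case (Cons q qs)
  have "sum_list (map snd qs) = length (drop (snd q) L)" using Cons.prems by simp
  then show ?case using Cons.IH[of "drop (snd q) L"] Cons.prems by (cases q) auto
qed simp

lemma forget_labels_inj: "inj_on forget_labels (pointed_lists U)"
proof (rule inj_onI)
  fix x y assume "forget_labels x = forget_labels y"
  moreover obtain ps k ps' k' where x: "x = (ps, k)" and y: "y = (ps', k')" by fastforce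
  ultimately have m: "map (\<lambda>p. (fst p, length (snd p))) ps = map (\<lambda>p. (fst p, length (snd p))) ps'"
    and kk: "k = k'" and c: "concat (map snd ps) = concat (map snd ps')"
    unfolding forget_labels_def by auto
  have "map fst ps = map fst ps'" using arg_cong[OF m, of "map fst"] by (simp add: comp_def)
  moreover have "map length (map snd ps) = map length (map snd ps')"
    using arg_cong[OF m, of "map snd"] by (simp add: comp_def)
  then have "map snd ps = map snd ps'" using c
    by (metis concat_injective list_all2_eq list_all2_iff list_all2_map1 list_all2_map2 length_map)
  ultimately have "ps = ps'" by (metis zip_map_fst_snd)
  then show "x = y" using x y kk by simp
qed

lemma forget_labels_into:
  assumes "(ps, k) \<in> pointed_lists U"
  shows "forget_labels (ps, k) \<in> pointed_block_lists (card U) \<times> label_orders U"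
proof -
  have V: "CP_valid U ps" and k: "k < length (snd (hd ps))" using assms unfolding pointed_lists_def by auto
  have ne: "ps \<noteq> []" and Pp: "\<forall>p\<in>set ps. p \<in> P_struct (set (snd p))"
    using V unfolding CP_valid_def by auto
  have L: "concat (map snd ps) \<in> label_orders U" using V unfolding CP_valid_def label_orders_def by simp
  have "map (\<lambda>p. (fst p, length (snd p))) ps \<in> block_lists (card U)"
    unfolding block_lists_def
  proof (intro CollectI conjI ballI)
    fix q assume "q \<in> set (map (\<lambda>p. (fst p, length (snd p))) ps)"
    then obtain p where p: "p \<in> set ps" "q = (fst p, length (snd p))" by auto
    then have "snd p \<noteq> [] \<and> ptolemy_poly (length (snd p) + 1) (fst p)"
      using Pp P_struct_self by blast
    then show "snd q \<ge> 1" "ptolemy_poly (snd q + 1) (fst q)" using p by (auto simp: Suc_le_eq)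
  next
    show "sum_list (map snd (map (\<lambda>p. (fst p, length (snd p))) ps)) = card U"
      using label_orders_length[OF L] by (simp add: length_concat comp_def)
  qed
  moreover have "k < snd (hd (map (\<lambda>p. (fst p, length (snd p))) ps))" using k ne by (simp add: hd_map)
  ultimately show ?thesis using L unfolding forget_labels_def pointed_block_lists_def by simp
qed

lemma distribute_pointed_list:
  assumes n: "1 \<le> card U" and Q: "qs \<in> block_lists (card U)" and k: "k < snd (hd qs)"
    and L: "L \<in> label_orders U"
  shows "(distribute qs L, k) \<in> pointed_lists U" and "forget_labels (distribute qs L, k) = ((qs, k), L)"
proof -
  have "sum_list (map snd qs) = length L"
    using Q label_orders_length[OF L] unfolding block_lists_def by simp
  then have shape: "map (\<lambda>p. (fst p, length (snd p))) (distribute qs L) = qs"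
    and labels: "concat (map snd (distribute qs L)) = L"
    using distribute_inverse by blast+
  define ps where "ps = distribute qs L"
  have ne: "ps \<noteq> []" using shape block_lists_nonempty[OF Q] n unfolding ps_def by force
  have dL: "distinct L" "set L = U" using L unfolding label_orders_def by auto
  have "CP_valid U ps" unfolding CP_valid_def
  proof (intro conjI ballI)
    show "ps \<noteq> []" by (rule ne)
    show "distinct (concat (map snd ps))" "set (concat (map snd ps)) = U"
      using labels dL unfolding ps_def by auto
    fix p assume p: "p \<in> set ps"
    then have "(fst p, length (snd p)) \<in> set (map (\<lambda>p. (fst p, length (snd p))) ps)" by force
    then have "(fst p, length (snd p)) \<in> set qs" unfolding ps_def shape .
    then have "length (snd p) \<ge> 1" "ptolemy_poly (length (snd p) + 1) (fst p)"
      using Q unfolding block_lists_def by auto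
    moreover have "distinct (snd p)" using labels dL p unfolding ps_def
      by (metis distinct_concat_iff image_eqI list.set_map)
    ultimately show "p \<in> P_struct (set (snd p))" unfolding P_struct_self by auto
  qed
  moreover have "k < length (snd (hd ps))"
    using k shape ne unfolding ps_def by (metis (no_types, lifting) hd_map snd_conv)
  ultimately show "(distribute qs L, k) \<in> pointed_lists U" unfolding pointed_lists_def ps_def by simp
  show "forget_labels (distribute qs L, k) = ((qs, k), L)"
    unfolding forget_labels_def using shape labels by simp
qed

lemma forget_labels_image:
  assumes n: "1 \<le> card U"
  shows "forget_labels ` pointed_lists U = pointed_block_lists (card U) \<times> label_orders U"
proof
  show "forget_labels ` pointed_lists U \<subseteq> pointed_block_lists (card U) \<times> label_orders U"
    using forget_labels_into by fastforce
  show "pointed_block_lists (card U) \<times> label_orders U \<subseteq> forget_labels ` pointed_lists U"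
  proof
    fix z assume "z \<in> pointed_block_lists (card U) \<times> label_orders U"
    then obtain qs k L where z: "z = ((qs, k), L)" and "qs \<in> block_lists (card U)"
      and "k < snd (hd qs)" and "L \<in> label_orders U" unfolding pointed_block_lists_def by auto
    note D = distribute_pointed_list[OF n this(2-4)]
    show "z \<in> forget_labels ` pointed_lists U" using D(1) D(2)[symmetric] unfolding z by blast
  qed
qed

section \<open>Labellings of residue classes\<close>

definition residue_class :: "nat \<Rightarrow> int \<Rightarrow> int set" where
  "residue_class n i = {k. k mod int n = i mod int n}"

definition residue :: "nat \<Rightarrow> int set \<Rightarrow> nat" where
  "residue n C = nat ((SOME m. m \<in> C) mod int n)"

lemma zmod_classes_residue_class: "zmod_classes (int n) = range (residue_class n)"
  unfolding zmod_classes_def residue_class_def by auto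

lemma residue_residue_class: "0 < n \<Longrightarrow> residue n (residue_class n i) = nat (i mod int n)"
  using someI[of "\<lambda>m. m \<in> residue_class n i" i] unfolding residue_def residue_class_def by simp

lemma residue_class_residue:
  "0 < n \<Longrightarrow> C \<in> zmod_classes (int n) \<Longrightarrow> residue_class n (int (residue n C)) = C"
  unfolding zmod_classes_residue_class by (auto simp: residue_residue_class) (auto simp: residue_class_def)

lemma residue_bij:
  assumes n: "0 < n"
  shows "bij_betw (residue n) (zmod_classes (int n)) {..<n}"
    and "bij_betw (\<lambda>j. residue_class n (int j)) {..<n} (zmod_classes (int n))"
proof -
  have inv1: "\<forall>C\<in>zmod_classes (int n). residue_class n (int (residue n C)) = C"
    using residue_class_residue[OF n] by blast
  have inv2: "\<forall>j\<in>{..<n}. residue n (residue_class n (int j)) = j"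
    using n by (simp add: residue_residue_class)
  have im1: "residue n ` zmod_classes (int n) \<subseteq> {..<n}"
    using n unfolding zmod_classes_residue_class by (auto simp: residue_residue_class nat_less_iff)
  have im2: "(\<lambda>j. residue_class n (int j)) ` {..<n} \<subseteq> zmod_classes (int n)"
    unfolding zmod_classes_residue_class by auto
  show "bij_betw (residue n) (zmod_classes (int n)) {..<n}"
    using inv1 inv2 im1 im2 by (rule bij_betw_byWitness)
  show "bij_betw (\<lambda>j. residue_class n (int j)) {..<n} (zmod_classes (int n))"
    using inv2 inv1 im2 im1 by (rule bij_betw_byWitness)
qed

definition class_labellings :: "'a set \<Rightarrow> (int set \<Rightarrow> 'a) set" where
  "class_labellings U = {lam. lam \<in> zmod_classes (int (card U)) \<rightarrow>\<^sub>E U \<and>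
                              bij_betw lam (zmod_classes (int (card U))) U}"

lemma periodic_pairs_product:
  "periodic_pairs U = periodic_diagrams (card U) \<times> class_labellings U"
  unfolding periodic_pairs_def periodic_diagrams_def class_labellings_def by auto

definition labelling :: "nat \<Rightarrow> 'a list \<Rightarrow> int set \<Rightarrow> 'a" where
  "labelling n L = restrict (\<lambda>C. L ! residue n C) (zmod_classes (int n))"

lemma labelling_in_class_labellings:
  assumes n: "1 \<le> card U" and L: "L \<in> label_orders U"
  shows "labelling (card U) L \<in> class_labellings U"
proof -
  let ?n = "card U" and ?A = "zmod_classes (int (card U))"
  have r: "bij_betw (residue ?n) ?A {..<?n}" using residue_bij(1) n by simp
  have l: "bij_betw ((!) L) {..<?n} U"
    using L label_orders_length[OF L] unfolding label_orders_def by (auto intro: bij_betw_nth)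
  have "bij_betw (labelling ?n L) ?A U"
    using bij_betw_trans[OF r l] unfolding labelling_def
    by (rule bij_betw_cong[THEN iffD1, rotated]) simp
  then show ?thesis unfolding labelling_def class_labellings_def by (auto simp: bij_betw_def)
qed

lemma labelling_inj:
  assumes n: "1 \<le> card U" shows "inj_on (labelling (card U)) (label_orders U)"
proof (rule inj_onI)
  fix L L' assume L: "L \<in> label_orders U" and L': "L' \<in> label_orders U"
    and eq: "labelling (card U) L = labelling (card U) L'"
  have "L ! j = L' ! j" if "j < card U" for j
  proof -
    have "residue_class (card U) (int j) \<in> zmod_classes (int (card U))"
      unfolding zmod_classes_residue_class by simp
    moreover have "residue (card U) (residue_class (card U) (int j)) = j"
      using that n by (simp add: residue_residue_class)
    ultimately show ?thesis using fun_cong[OF eq, of "residue_class (card U) (int j)"]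
      unfolding labelling_def by simp
  qed
  then show "L = L'"
    using label_orders_length[OF L] label_orders_length[OF L'] by (intro nth_equalityI) auto
qed

lemma labelling_surj:
  assumes n: "1 \<le> card U" and lam: "lam \<in> class_labellings U"
  shows "lam \<in> labelling (card U) ` label_orders U"
proof -
  let ?n = "card U" and ?A = "zmod_classes (int (card U))"
  have lE: "lam \<in> ?A \<rightarrow>\<^sub>E U" and lb: "bij_betw lam ?A U"
    using lam unfolding class_labellings_def by auto
  have r: "bij_betw (residue ?n) ?A {..<?n}"
    and rinv: "bij_betw (\<lambda>j. residue_class ?n (int j)) {..<?n} ?A"
    using residue_bij n by simp_all
  define L where "L = map (\<lambda>j. lam (residue_class ?n (int j))) [0..<?n]"
  have "bij_betw ((!) L) {..<?n} U"
  proof (rule bij_betw_cong[THEN iffD1])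
    show "bij_betw (lam \<circ> (\<lambda>j. residue_class ?n (int j))) {..<?n} U" using bij_betw_trans[OF rinv lb] .
  qed (simp add: L_def)
  moreover have "length L = ?n" by (simp add: L_def)
  moreover have "set L = (!) L ` {..<length L}" by (auto simp: in_set_conv_nth)
  moreover have "distinct L \<longleftrightarrow> inj_on ((!) L) {..<length L}"
    by (auto simp: distinct_conv_nth inj_on_def)
  ultimately have "L \<in> label_orders U" unfolding label_orders_def bij_betw_def by simp
  moreover have "labelling ?n L = lam"
  proof
    fix C show "labelling ?n L C = lam C"
    proof (cases "C \<in> ?A")
      case True
      then have "residue ?n C < ?n" using bij_betw_apply[OF r] by blast
      then show ?thesis using True residue_class_residue[of ?n C] n unfolding labelling_def L_def by simp
    next
      case False
      then show ?thesis using lE unfolding labelling_def by (simp add: PiE_def extensional_def)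
    qed
  qed
  ultimately show ?thesis by blast
qed

lemma labelling_bij:
  assumes "1 \<le> card U"
  shows "bij_betw (labelling (card U)) (label_orders U) (class_labellings U)"
  unfolding bij_betw_def
  using labelling_inj labelling_in_class_labellings labelling_surj assms by blast


theorem mainTheorem8:
  fixes U :: "'a set"
  assumes "finite U" and "card U \<ge> 1"
  shows "\<exists>f. bij_betw f (CP_pointed U) (periodic_pairs U)"
proof -
  have n: "0 < card U" using assms(2) by simp
  have "bij_betw mark (pointed_lists U) (CP_pointed U)"
    unfolding bij_betw_def using mark_inj mark_image by blast
  then have marking: "bij_betw (inv_into (pointed_lists U) mark) (CP_pointed U) (pointed_lists U)"
    by (rule bij_betw_inv_into)
  have forgetting:
    "bij_betw forget_labels (pointed_lists U) (pointed_block_lists (card U) \<times> label_orders U)"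
    unfolding bij_betw_def using forget_labels_inj forget_labels_image[OF assms(2)] by blast
  have realizing: "bij_betw (map_prod (diagram_of (card U)) (labelling (card U)))
      (pointed_block_lists (card U) \<times> label_orders U) (periodic_pairs U)"
    unfolding periodic_pairs_product
    by (rule bij_betw_map_prod[OF diagram_of_bij[OF n] labelling_bij[OF assms(2)]])
  show ?thesis using bij_betw_trans[OF bij_betw_trans[OF marking forgetting] realizing] by blast
qed

end
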